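(* Let $G, G_1,\dots,G_m$ and $H_1,\dots,H_n$ be abelian groups with tiles $A \subset B \subset C \subset G$, $T_i \subset B_i \subset G_i$ ($1\le i\le m$) and $U_i \subset C_i \subset H_i$ ($1\le i\le n$), and let $d$ be a positive integer. Suppose that $B_1\times\dots\times B_m\times B$ is $(T_1,\dots,T_m,A)$-tilable and that $C_1\times\dots\times C_n\times C^d$ is $(U_1,\dots,U_n,B^{\times d})$-tilable. Then $B_1\times\dots\times B_m\times C_1\times\dots\times C_n\times C^d$ is $(T_1,\dots,T_m,U_1,\dots,U_n,A^{\times d})$-tilable.
   Context: A tile in an abelian group is a non-empty subset. Given abelian groups $K_1,\dots,K_r$ and tiles $V_j\subset K_j$, let $\mathsf{V}_j \subset K_1\times\dots\times K_r$ be the set of points whose $j$-th coordinate lies in $V_j$ and whose other coordinates are $0$. A copy of $V_j$ is a translate $\mathsf{V}_j + x$ with $x \in K_1\times\dots\times K_r$. A subset of $K_1\times\dots\times K_r$ is $(V_1,\dots,V_r)$-tilable if it is a disjoint union of copies of $V_1,\dots,V_r$. The notation $V^{\times e}$ in such a list stands for $e$ consecutive entries $V,\dots,V$ (corresponding to $e$ consecutive factors). *)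

theory Defs
  imports Main
begin

text \<open>All abelian groups are realised as subgroups of one ambient abelian group type 'a.
  Points of K_1 x ... x K_r are lists of length r; the product of sets is listset.\<close>

definition ab_subgroup :: "'a::ab_group_add set \<Rightarrow> bool" where
  "ab_subgroup K \<longleftrightarrow> 0 \<in> K \<and> (\<forall>x\<in>K. \<forall>y\<in>K. x + y \<in> K) \<and> (\<forall>x\<in>K. - x \<in> K)"

definition is_tile :: "'a set \<Rightarrow> 'a set \<Rightarrow> bool" where
  "is_tile K V \<longleftrightarrow> V \<noteq> {} \<and> V \<subseteq> K"

definition embed_tile :: "nat \<Rightarrow> nat \<Rightarrow> 'a::zero set \<Rightarrow> 'a list set" where
  "embed_tile r j V = {xs. length xs = r \<and> xs ! j \<in> V \<and> (\<forall>i<r. i \<noteq> j \<longrightarrow> xs ! i = 0)}"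

definition tile_copy :: "nat \<Rightarrow> nat \<Rightarrow> 'a::ab_group_add set \<Rightarrow> 'a list \<Rightarrow> 'a list set" where
  "tile_copy r j V x = (\<lambda>v. map2 (+) v x) ` embed_tile r j V"

definition tilable :: "'a::ab_group_add set list \<Rightarrow> 'a set list \<Rightarrow> 'a list set \<Rightarrow> bool" where
  "tilable Ks Vs S \<longleftrightarrow> length Vs = length Ks \<and>
     (\<exists>\<C>. (\<forall>c\<in>\<C>. \<exists>j<length Ks. \<exists>x\<in>listset Ks. c = tile_copy (length Ks) j (Vs ! j) x)
         \<and> pairwise disjnt \<C> \<and> \<Union>\<C> = S)"

end

theory Submission
  imports Defs
begin

(* Write the product as \<Prod>B_i \<times> \<Prod>(C_i \<times> C^d) and lift a tiling of the second factor.
   A copy of U_i, multiplied by \<Prod>B_i, is the disjoint union over p \<in> \<Prod>B_i of copies of U_i.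
   A copy of B sitting in one of the last d coordinates, multiplied by \<Prod>B_i, is a translate of
   the image of \<Prod>B_i \<times> B under the linear map moving the last coordinate to that position; this
   map sends copies to copies, so the (T_1,...,T_m,A)-tiling of \<Prod>B_i \<times> B is carried along. *)

lemma in_listset_iff:
  "xs \<in> listset As \<longleftrightarrow> length xs = length As \<and> (\<forall>i<length As. xs ! i \<in> As ! i)"
proof -
  have "xs \<in> listset As \<longleftrightarrow> list_all2 (\<in>) xs As"
    by (induction As arbitrary: xs) (auto simp: set_Cons_def list_all2_Cons2)
  then show ?thesis
    by (auto simp: list_all2_conv_all_nth)
qed

definition append_sets :: "'a list set \<Rightarrow> 'a list set \<Rightarrow> 'a list set" where
  "append_sets P S = {p @ s |p s. p \<in> P \<and> s \<in> S}"

lemma listset_append: "listset (Xs @ Ys) = append_sets (listset Xs) (listset Ys)"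
  by (induction Xs) (auto simp: append_sets_def set_Cons_def, metis append_Cons, blast)

lemma append_sets_Union: "append_sets P (\<Union>\<C>) = (\<Union>c\<in>\<C>. append_sets P c)"
  by (auto simp: append_sets_def)

lemma append_sets_eq_UN: "append_sets P S = (\<Union>p\<in>P. (@) p ` S)"
  by (auto simp: append_sets_def)

lemma disjnt_append_sets:
  assumes "\<forall>p\<in>P. length p = m" "disjnt S S'"
  shows "disjnt (append_sets P S) (append_sets P S')"
  using assms by (auto simp: append_sets_def disjnt_def)

lemma length_tile_copy: "length x = r \<Longrightarrow> y \<in> tile_copy r j V x \<Longrightarrow> length y = r"
  by (auto simp: tile_copy_def embed_tile_def)

lemma embed_tile_eq_image: "j < r \<Longrightarrow> embed_tile r j V = (\<lambda>v. (replicate r 0)[j := v]) ` V"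
proof (intro set_eqI iffI)
  fix w assume "j < r" "w \<in> embed_tile r j V"
  then have "w = (replicate r 0)[j := w ! j]"
    by (intro nth_equalityI) (auto simp: embed_tile_def nth_list_update)
  then show "w \<in> (\<lambda>v. (replicate r 0)[j := v]) ` V"
    using \<open>w \<in> embed_tile r j V\<close> by (auto simp: embed_tile_def)
qed (auto simp: embed_tile_def nth_list_update)

lemma tile_copy_eq_image:
  "j < r \<Longrightarrow> tile_copy r j V x = (\<lambda>v. map2 (+) ((replicate r 0)[j := v]) x) ` V"
  by (simp add: tile_copy_def embed_tile_eq_image image_image)

lemma image_tile_copy:
  assumes "j < r" "j' < r'"
    and "\<And>v. v \<in> V \<Longrightarrow>
      f (map2 (+) ((replicate r 0)[j := v]) x) = map2 (+) ((replicate r' 0)[j' := v]) (f x)"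
  shows "f ` tile_copy r j V x = tile_copy r' j' V (f x)"
  using assms by (simp add: tile_copy_eq_image image_image)

lemma image_append_tile_copy:
  assumes "j < r" "length x = r"
  shows "(@) p ` tile_copy r j V x = tile_copy (length p + r) (length p + j) V (p @ x)"
  using assms by (intro image_tile_copy) (auto intro!: nth_equalityI simp: nth_append nth_list_update)

lemma image_translate_tile_copy:
  assumes "j < r" "length x = r" "length t = r"
  shows "(\<lambda>v. map2 (+) v t) ` tile_copy r j V x = tile_copy r j V (map2 (+) x t)"
  using assms by (intro image_tile_copy) (auto intro!: nth_equalityI simp: add.assoc)

definition insert_coord :: "nat \<Rightarrow> nat \<Rightarrow> 'a::zero list \<Rightarrow> 'a list" where
  "insert_coord r q y = butlast y @ (replicate r 0)[q := last y]"

lemma length_insert_coord: "length y = m + 1 \<Longrightarrow> length (insert_coord r q y) = m + r"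
  by (simp add: insert_coord_def)

lemma nth_insert_coord:
  assumes "length y = m + 1" "i < m + r"
  shows "insert_coord r q y ! i = (if i < m then y ! i else if i = m + q then y ! m else 0)"
proof -
  have "y \<noteq> []"
    using assms(1) by auto
  then have "last y = y ! m"
    using assms(1) by (simp add: last_conv_nth)
  with \<open>y \<noteq> []\<close> show ?thesis
    using assms by (auto simp: insert_coord_def nth_append nth_butlast nth_list_update)
qed

lemma insert_coord_append: "insert_coord r q (p @ [b]) = p @ (replicate r 0)[q := b]"
  by (simp add: insert_coord_def)

lemma image_insert_coord_tile_copy:
  fixes z :: "'a::ab_group_add list"
  assumes "length z = m + 1" "j < m + 1" "q < r"
  shows "insert_coord r q ` tile_copy (m + 1) j V z =
    tile_copy (m + r) (if j < m then j else m + q) V (insert_coord r q z)"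
proof (rule image_tile_copy)
  fix v :: 'a
  let ?e = "(replicate (m + r) 0)[if j < m then j else m + q := v]"
  define y where "y = map2 (+) ((replicate (m + 1) 0)[j := v]) z"
  have y: "length y = m + 1" "\<And>i. i < m + 1 \<Longrightarrow> y ! i = (if i = j then v else 0) + z ! i"
    using assms(1) by (simp_all add: y_def nth_list_update del: replicate_Suc)
  have "length (insert_coord r q y) = m + r" "length (insert_coord r q z) = m + r"
    using y(1) assms(1) by (simp_all add: length_insert_coord)
  then show "insert_coord r q y = map2 (+) ?e (insert_coord r q z)"
    using assms y by (intro nth_equalityI) (auto simp: nth_insert_coord nth_list_update)
qed (use assms in auto)

lemma append_sets_tile_copy_eq:
  assumes "\<forall>p\<in>P. length p = m" "q < length x"
  shows "append_sets P (tile_copy (length x) q B x) =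
    (\<lambda>v. map2 (+) v (replicate m 0 @ x)) ` insert_coord (length x) q ` append_sets P ((\<lambda>b. [b]) ` B)"
    (is "_ = ?\<tau> ` ?\<iota> ` _")
proof -
  let ?e = "\<lambda>b. (replicate (length x) 0)[q := b]"
  have shift: "?\<tau> (?\<iota> (p @ [b])) = p @ map2 (+) (?e b) x" if "p \<in> P" for p b
    using that assms(1) by (intro nth_equalityI) (auto simp: insert_coord_append nth_append nth_list_update)
  have "append_sets P (tile_copy (length x) q B x) = {p @ map2 (+) (?e b) x |p b. p \<in> P \<and> b \<in> B}"
    unfolding tile_copy_eq_image[OF assms(2)] append_sets_def by blast
  also have "\<dots> = {?\<tau> (?\<iota> (p @ [b])) |p b. p \<in> P \<and> b \<in> B}"
    by (auto simp: shift) (metis shift)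
  also have "\<dots> = ?\<tau> ` ?\<iota> ` append_sets P ((\<lambda>b. [b]) ` B)"
    unfolding append_sets_def by auto (intro imageI, blast)
  finally show ?thesis .
qed

definition is_copy :: "'a::ab_group_add set list \<Rightarrow> 'a set list \<Rightarrow> 'a list set \<Rightarrow> bool" where
  "is_copy Ks Vs c \<longleftrightarrow> (\<exists>j<length Ks. \<exists>x\<in>listset Ks. c = tile_copy (length Ks) j (Vs ! j) x)"

lemma tilable_iff_copies:
  "tilable Ks Vs S \<longleftrightarrow>
    length Vs = length Ks \<and> (\<exists>\<C>. Ball \<C> (is_copy Ks Vs) \<and> pairwise disjnt \<C> \<and> \<Union>\<C> = S)"
  by (simp add: tilable_def is_copy_def)

lemma tilable_copy: "length Vs = length Ks \<Longrightarrow> is_copy Ks Vs c \<Longrightarrow> tilable Ks Vs c"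
  unfolding tilable_iff_copies by (intro conjI exI[of _ "{c}"]) auto

lemma tilable_lengths:
  assumes "tilable Ks Vs S" "xs \<in> S"
  shows "length xs = length Ks"
proof -
  obtain j x where "x \<in> listset Ks" "xs \<in> tile_copy (length Ks) j (Vs ! j) x"
    using assms unfolding tilable_def by blast
  then show ?thesis
    by (auto simp: in_listset_iff intro: length_tile_copy)
qed

lemma tilable_UN:
  assumes "length Vs = length Ks"
    and "pairwise (\<lambda>a b. disjnt (S a) (S b)) I"
    and "\<And>a. a \<in> I \<Longrightarrow> tilable Ks Vs (S a)"
  shows "tilable Ks Vs (\<Union>a\<in>I. S a)"
proof -
  obtain \<C> where \<C>: "\<And>a. a \<in> I \<Longrightarrow>
      Ball (\<C> a) (is_copy Ks Vs) \<and> pairwise disjnt (\<C> a) \<and> \<Union>(\<C> a) = S a"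
    using assms(3) unfolding tilable_iff_copies by metis
  have "pairwise disjnt (\<Union>a\<in>I. \<C> a)"
  proof (rule pairwiseI)
    fix c c' assume "c \<in> (\<Union>a\<in>I. \<C> a)" "c' \<in> (\<Union>a\<in>I. \<C> a)" "c \<noteq> c'"
    then obtain a a' where "a \<in> I" "a' \<in> I" "c \<in> \<C> a" "c' \<in> \<C> a'"
      by blast
    show "disjnt c c'"
    proof (cases "a = a'")
      case True
      then show ?thesis
        using \<C> \<open>a \<in> I\<close> \<open>c \<in> \<C> a\<close> \<open>c' \<in> \<C> a'\<close> \<open>c \<noteq> c'\<close> by (auto simp: pairwise_def)
    next
      case False
      then have "disjnt (S a) (S a')"
        using assms(2) \<open>a \<in> I\<close> \<open>a' \<in> I\<close> by (auto simp: pairwise_def)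
      moreover have "c \<subseteq> S a" "c' \<subseteq> S a'"
        using \<C> \<open>a \<in> I\<close> \<open>a' \<in> I\<close> \<open>c \<in> \<C> a\<close> \<open>c' \<in> \<C> a'\<close> by auto
      ultimately show ?thesis
        unfolding disjnt_def by blast
    qed
  qed
  moreover have "\<Union>(\<Union>a\<in>I. \<C> a) = (\<Union>a\<in>I. S a)"
  proof -
    have "\<Union>(\<Union>a\<in>I. \<C> a) = (\<Union>a\<in>I. \<Union>(\<C> a))"
      by blast
    then show ?thesis
      using \<C> by simp
  qed
  moreover have "Ball (\<Union>a\<in>I. \<C> a) (is_copy Ks Vs)"
    using \<C> by blast
  ultimately show ?thesis
    unfolding tilable_iff_copies using assms(1) by (intro conjI exI[of _ "\<Union>a\<in>I. \<C> a"])
qed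

lemma tilable_image:
  assumes "tilable Ks Vs S" "inj_on f S" "length Vs' = length Ks'"
    and "\<And>c. is_copy Ks Vs c \<Longrightarrow> is_copy Ks' Vs' (f ` c)"
  shows "tilable Ks' Vs' (f ` S)"
proof -
  obtain \<C> where \<C>: "Ball \<C> (is_copy Ks Vs)" "pairwise disjnt \<C>" "\<Union>\<C> = S"
    using assms(1) unfolding tilable_iff_copies by blast
  have "pairwise disjnt ((`) f ` \<C>)"
  proof (rule pairwise_imageI)
    fix c c' assume "c \<in> \<C>" "c' \<in> \<C>" "c \<noteq> c'"
    then have "c \<inter> c' = {}" "c \<subseteq> S" "c' \<subseteq> S"
      using \<C>(2,3) by (auto simp: pairwise_def disjnt_def)
    then have "f ` c \<inter> f ` c' = f ` (c \<inter> c')"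
      using inj_on_image_Int[OF assms(2)] by blast
    with \<open>c \<inter> c' = {}\<close> show "disjnt (f ` c) (f ` c')"
      by (simp add: disjnt_def)
  qed
  moreover have "\<Union>((`) f ` \<C>) = f ` S"
    unfolding \<C>(3)[symmetric] by (rule image_Union[symmetric])
  moreover have "Ball ((`) f ` \<C>) (is_copy Ks' Vs')"
    using \<C>(1) assms(4) by blast
  ultimately show ?thesis
    unfolding tilable_iff_copies using assms(3) by (intro conjI exI[of _ "(`) f ` \<C>"])
qed

lemma tilable_append_sets:
  assumes "tilable Ks' Vs' S" "P \<subseteq> listset Ks" "length Vs = length Ks"
  shows "tilable (Ks @ Ks') (Vs @ Vs') (append_sets P S)"
  unfolding append_sets_eq_UN
proof (rule tilable_UN)
  show "length (Vs @ Vs') = length (Ks @ Ks')"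
    using assms(1,3) by (simp add: tilable_def)
  show "pairwise (\<lambda>p p'. disjnt ((@) p ` S) ((@) p' ` S)) P"
  proof (rule pairwiseI)
    fix p p' assume "p \<in> P" "p' \<in> P" "p \<noteq> p'"
    then have "length p = length p'"
      using assms(2) in_listset_iff by (metis subsetD)
    with \<open>p \<noteq> p'\<close> show "disjnt ((@) p ` S) ((@) p' ` S)"
      by (auto simp: disjnt_def)
  qed
  fix p assume "p \<in> P"
  then have p: "p \<in> listset Ks" "length p = length Ks"
    using assms(2) by (auto simp: in_listset_iff)
  show "tilable (Ks @ Ks') (Vs @ Vs') ((@) p ` S)"
  proof (rule tilable_image[OF assms(1)])
    show "inj_on ((@) p) S"
      by (simp add: inj_on_def)
    show "length (Vs @ Vs') = length (Ks @ Ks')"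
      using assms(1,3) by (simp add: tilable_def)
    fix c assume "is_copy Ks' Vs' c"
    then obtain j x where "j < length Ks'" "x \<in> listset Ks'"
        "c = tile_copy (length Ks') j (Vs' ! j) x"
      unfolding is_copy_def by blast
    moreover have "(Vs @ Vs') ! (length Ks + j) = Vs' ! j"
      using assms(3) by (simp add: nth_append)
    ultimately show "is_copy (Ks @ Ks') (Vs @ Vs') ((@) p ` c)"
      unfolding is_copy_def using p
      by (intro exI[of _ "length Ks + j"] bexI[of _ "p @ x"])
         (auto simp: image_append_tile_copy listset_append append_sets_def in_listset_iff)
  qed
qed

lemma tilable_translate:
  assumes "tilable Ks Vs S" "\<forall>K\<in>set Ks. ab_subgroup K" "t \<in> listset Ks"
  shows "tilable Ks Vs ((\<lambda>v. map2 (+) v t) ` S)"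
proof (rule tilable_image[OF assms(1)])
  show "inj_on (\<lambda>v. map2 (+) v t) S"
  proof (rule inj_onI)
    fix v w assume "v \<in> S" "w \<in> S" and eq: "map2 (+) v t = map2 (+) w t"
    then have l: "length v = length t" "length w = length t"
      using tilable_lengths[OF assms(1)] assms(3) by (auto simp: in_listset_iff)
    show "v = w"
    proof (rule nth_equalityI)
      fix i assume "i < length v"
      then have "map2 (+) v t ! i = map2 (+) w t ! i"
        using eq by simp
      with \<open>i < length v\<close> show "v ! i = w ! i"
        using l by simp
    qed (simp add: l)
  qed
  show "length Vs = length Ks"
    using assms(1) by (simp add: tilable_def)
  fix c assume "is_copy Ks Vs c"
  then obtain j x where "j < length Ks" "x \<in> listset Ks" "c = tile_copy (length Ks) j (Vs ! j) x"
    unfolding is_copy_def by blast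
  moreover have "map2 (+) x t \<in> listset Ks"
    using \<open>x \<in> listset Ks\<close> assms(2,3) by (auto simp: in_listset_iff ab_subgroup_def)
  ultimately show "is_copy Ks Vs ((\<lambda>v. map2 (+) v t) ` c)"
    unfolding is_copy_def using assms(3)
    by (intro exI[of _ j] bexI[of _ "map2 (+) x t"]) (auto simp: image_translate_tile_copy in_listset_iff)
qed

lemma tilable_insert_coord:
  assumes "tilable (Ks @ [K]) (Vs @ [V]) S" "length Vs' = length Ks'"
    and "q < length Ks'" "Ks' ! q = K" "Vs' ! q = V" "\<forall>K'\<in>set Ks'. 0 \<in> K'"
  shows "tilable (Ks @ Ks') (Vs @ Vs') (insert_coord (length Ks') q ` S)"
proof (rule tilable_image[OF assms(1)])
  let ?m = "length Ks" and ?r = "length Ks'"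
  have lVs: "length Vs = ?m"
    using assms(1) by (simp add: tilable_def)
  show "inj_on (insert_coord ?r q) S"
  proof (rule inj_onI)
    fix y y' assume "y \<in> S" "y' \<in> S" and eq: "insert_coord ?r q y = insert_coord ?r q y'"
    then have l: "length y = ?m + 1" "length y' = ?m + 1"
      using tilable_lengths[OF assms(1)] by auto
    show "y = y'"
    proof (rule nth_equalityI)
      fix i assume "i < length y"
      then have "i < ?m \<or> i = ?m"
        using l by auto
      then have "insert_coord ?r q y ! (if i < ?m then i else ?m + q) = y ! i"
        "insert_coord ?r q y' ! (if i < ?m then i else ?m + q) = y' ! i"
        using l assms(3) by (auto simp: nth_insert_coord)
      then show "y ! i = y' ! i"
        using eq by simp
    qed (simp add: l)
  qed
  show "length (Vs @ Vs') = length (Ks @ Ks')"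
    using lVs assms(2) by simp
  fix c assume "is_copy (Ks @ [K]) (Vs @ [V]) c"
  then obtain j z where j: "j < ?m + 1" and z: "z \<in> listset (Ks @ [K])"
    and c: "c = tile_copy (?m + 1) j ((Vs @ [V]) ! j) z"
    unfolding is_copy_def by auto
  define j' where "j' = (if j < ?m then j else ?m + q)"
  have lz: "length z = ?m + 1"
    using z by (simp add: in_listset_iff)
  have "insert_coord ?r q z ! i \<in> (Ks @ Ks') ! i" if "i < ?m + ?r" for i
  proof -
    have zK: "z ! i \<in> (Ks @ [K]) ! i" if "i < ?m + 1" for i
      using z that by (simp add: in_listset_iff)
    have "z ! i \<in> Ks ! i" if "i < ?m"
      using zK[of i] that by (simp add: nth_append)
    moreover have "z ! ?m \<in> K"
      using zK[of ?m] by simp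
    ultimately show ?thesis
      using that assms(3,4,6) by (auto simp: nth_insert_coord[OF lz] nth_append)
  qed
  then have "insert_coord ?r q z \<in> listset (Ks @ Ks')"
    by (simp add: in_listset_iff length_insert_coord[OF lz])
  moreover have "(Vs @ [V]) ! j = (Vs @ Vs') ! j'"
    using j lVs assms(5) by (auto simp: j'_def nth_append)
  moreover have "j' < length (Ks @ Ks')"
    using j assms(3) by (simp add: j'_def)
  ultimately show "is_copy (Ks @ Ks') (Vs @ Vs') (insert_coord ?r q ` c)"
    unfolding is_copy_def c image_insert_coord_tile_copy[OF lz j assms(3)] j'_def[symmetric] by auto
qed

lemma tilable_append_sets_tile_copy:
  assumes "tilable (Ks @ [K]) (Vs @ [A]) (listset (Bs @ [B]))" "length Bs = length Ks"
    and "\<forall>K\<in>set (Ks @ Ks'). ab_subgroup K" "length Vs' = length Ks'"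
    and "q < length Ks'" "Ks' ! q = K" "Vs' ! q = A" "x \<in> listset Ks'"
  shows "tilable (Ks @ Ks') (Vs @ Vs') (append_sets (listset Bs) (tile_copy (length Ks') q B x))"
proof -
  have lx: "length x = length Ks'"
    using assms(8) by (simp add: in_listset_iff)
  have "append_sets (listset Bs) (tile_copy (length Ks') q B x) =
      (\<lambda>v. map2 (+) v (replicate (length Ks) 0 @ x)) ` insert_coord (length Ks') q ` listset (Bs @ [B])"
    using append_sets_tile_copy_eq[of "listset Bs" "length Ks" q x B] assms(2,5) lx
    by (simp add: listset_append in_listset_iff)
  moreover have "tilable (Ks @ Ks') (Vs @ Vs') (insert_coord (length Ks') q ` listset (Bs @ [B]))"
    using assms(3) by (intro tilable_insert_coord[OF assms(1,4-7)]) (simp add: ab_subgroup_def)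
  moreover have "replicate (length Ks) 0 @ x \<in> listset (Ks @ Ks')"
    using assms(3,8) by (auto simp: in_listset_iff nth_append ab_subgroup_def)
  ultimately show ?thesis
    using assms(3) by (simp add: tilable_translate)
qed

lemma tilable_append_sets_copy:
  assumes "tilable (Ks @ [K]) (Vs @ [A]) (listset (Bs @ [B]))"
    and "listset Bs \<subseteq> listset Ks" "length Bs = length Ks"
    and "\<forall>K'\<in>set (Ks @ Hs). ab_subgroup K'" "ab_subgroup K" "length Us = length Hs"
    and "is_copy (Hs @ replicate d K) (Us @ replicate d B) c"
  shows "tilable (Ks @ Hs @ replicate d K) (Vs @ Us @ replicate d A) (append_sets (listset Bs) c)"
proof -
  let ?Ks = "Hs @ replicate d K"
  obtain j x where j: "j < length ?Ks" and x: "x \<in> listset ?Ks"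
    and c: "c = tile_copy (length ?Ks) j ((Us @ replicate d B) ! j) x"
    using assms(7) unfolding is_copy_def by blast
  have lVs: "length Vs = length Ks"
    using assms(1) by (simp add: tilable_def)
  show ?thesis
  proof (cases "j < length Hs")
    case True
    then have "tilable ?Ks (Us @ replicate d A) c"
      using j x c assms(6) by (intro tilable_copy) (auto simp: is_copy_def nth_append)
    then show ?thesis
      using assms(2) lVs by (simp add: tilable_append_sets)
  next
    case False
    then have "(Us @ replicate d B) ! j = B" "?Ks ! j = K" "(Us @ replicate d A) ! j = A"
      using j assms(6) by (simp_all add: nth_append)
    then show ?thesis
      unfolding c \<open>(Us @ replicate d B) ! j = B\<close> using assms(3-6) j x
      by (intro tilable_append_sets_tile_copy[OF assms(1)]) auto
  qed
qed

theorem proposition15: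
  fixes G :: "'a::ab_group_add set"
    and A B C :: "'a set"
    and Gs Ts Bs :: "'a set list"
    and Hs Us Cs :: "'a set list"
    and d :: nat
  assumes "ab_subgroup G"
    and "\<forall>K\<in>set Gs. ab_subgroup K"
    and "\<forall>K\<in>set Hs. ab_subgroup K"
    and "length Ts = length Gs" and "length Bs = length Gs"
    and "length Us = length Hs" and "length Cs = length Hs"
    and "is_tile G A" and "is_tile G B" and "is_tile G C"
    and "A \<subseteq> B" and "B \<subseteq> C"
    and "\<forall>i<length Gs. is_tile (Gs ! i) (Ts ! i) \<and> is_tile (Gs ! i) (Bs ! i) \<and> Ts ! i \<subseteq> Bs ! i"
    and "\<forall>i<length Hs. is_tile (Hs ! i) (Us ! i) \<and> is_tile (Hs ! i) (Cs ! i) \<and> Us ! i \<subseteq> Cs ! i"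
    and "d > 0"
    and "tilable (Gs @ [G]) (Ts @ [A]) (listset (Bs @ [B]))"
    and "tilable (Hs @ replicate d G) (Us @ replicate d B) (listset (Cs @ replicate d C))"
  shows "tilable (Gs @ Hs @ replicate d G) (Ts @ Us @ replicate d A)
           (listset (Bs @ Cs @ replicate d C))"
proof -
  obtain \<C> where \<C>: "Ball \<C> (is_copy (Hs @ replicate d G) (Us @ replicate d B))"
      "pairwise disjnt \<C>" "\<Union>\<C> = listset (Cs @ replicate d C)"
    using assms(17) unfolding tilable_iff_copies by blast
  have "listset Bs \<subseteq> listset Gs"
    using assms(5,13) by (force simp: in_listset_iff is_tile_def)
  have "listset (Bs @ Cs @ replicate d C) = (\<Union>c\<in>\<C>. append_sets (listset Bs) c)"
    unfolding listset_append[of Bs] \<C>(3)[symmetric] append_sets_Union ..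
  also have "tilable (Gs @ Hs @ replicate d G) (Ts @ Us @ replicate d A) \<dots>"
  proof (rule tilable_UN)
    show "length (Ts @ Us @ replicate d A) = length (Gs @ Hs @ replicate d G)"
      using assms(4,6) by simp
    show "pairwise (\<lambda>c c'. disjnt (append_sets (listset Bs) c) (append_sets (listset Bs) c')) \<C>"
      using \<C>(2) disjnt_append_sets[of "listset Bs" "length Bs"]
      by (auto simp: pairwise_def in_listset_iff)
    fix c assume "c \<in> \<C>"
    then show "tilable (Gs @ Hs @ replicate d G) (Ts @ Us @ replicate d A) (append_sets (listset Bs) c)"
      using \<C>(1) \<open>listset Bs \<subseteq> listset Gs\<close> assms(1-6)
      by (intro tilable_append_sets_copy[OF assms(16)]) auto
  qed
  finally show ?thesis .
qed

end
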